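(* Let $\nu$ be a Krull valuation on $\mathbb{K}[x]$, $\mu$ a valuation on $\overline{\mathbb{K}}[x]$ extending $\nu$, $Q$ a key polynomial for $\nu$ of degree $n$, and $a$ an optimizing root of $Q$. Assume $\nu(Q)\in\mu\overline{\mathbb{K}}$ and let $e$ be the least positive integer with $e\nu(Q)\in\mu\mathbb{K}(a)$. Then for every $g\in\mathbb{K}[x]$ with $\deg g<ne$ we have $\mu_{x-a}(g)=\mu(g)=\nu_Q(g)$.
   Context: $\overline{\mathbb{K}}$ is an algebraic closure of $\mathbb{K}$; $\mu\overline{\mathbb{K}}$ and $\mu\mathbb{K}(a)$ are the value groups of $\mu$ restricted to $\overline{\mathbb{K}}$ and to $\mathbb{K}(a)$. Truncations: $\nu_Q(f)=\min_i\nu(f_iQ^i)$ where $f=\sum f_iQ^i$ is the $Q$-expansion ($\deg f_i<\deg Q$), and $\mu_{x-a}(\sum_i c_i(x-a)^i)=\min_i\{\mu(c_i)+i\mu(x-a)\}$. Optimizing root: a root $c$ of $Q$ maximizing $\mu(x-c)$ among roots of $Q$. Key polynomials: for nonzero $f\in\mathbb{K}[x]$, with Hasse derivatives $\partial_bf=\sum_{i\ge b}\binom{i}{b}a_ix^{i-b}$ for $f=\sum a_ix^i$, $\epsilon(f)=\max_{1\le b\le\deg f}(\nu(f)-\nu(\partial_bf))/b$ if $\deg f>0$ and $\epsilon(f)=-\infty$ if $f$ is constant; a monic $Q$ is a key polynomial for $\nu$ if $\epsilon(f)\ge\epsilon(Q)$ implies $\deg f\ge\deg Q$ for all $f$. 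*)

theory Defs
  imports "HOL-Computational_Algebra.Polynomial"
begin

definition is_subfield :: "'a::field set \<Rightarrow> bool" where
  "is_subfield F \<longleftrightarrow> 0 \<in> F \<and> 1 \<in> F \<and>
     (\<forall>x\<in>F. \<forall>y\<in>F. x + y \<in> F \<and> x - y \<in> F \<and> x * y \<in> F) \<and>
     (\<forall>x\<in>F. x \<noteq> 0 \<longrightarrow> inverse x \<in> F)"

text \<open>The polynomial ring F[x], as polynomials over the ambient field with coefficients in F.\<close>
definition polys_over :: "'a::field set \<Rightarrow> 'a poly set" where
  "polys_over F = {p. \<forall>i. coeff p i \<in> F}"

definition algebraic_over :: "'a::field set \<Rightarrow> 'a \<Rightarrow> bool" where
  "algebraic_over F y \<longleftrightarrow> (\<exists>p\<in>polys_over F. p \<noteq> 0 \<and> poly p y = 0)"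

definition is_algebraic_closure :: "'a::field set \<Rightarrow> 'a set \<Rightarrow> bool" where
  "is_algebraic_closure K Kb \<longleftrightarrow> is_subfield K \<and> is_subfield Kb \<and> K \<subseteq> Kb \<and>
     (\<forall>y\<in>Kb. algebraic_over K y) \<and>
     (\<forall>p\<in>polys_over Kb. degree p > 0 \<longrightarrow> (\<exists>y\<in>Kb. poly p y = 0))"

definition adjoin :: "'a::field set \<Rightarrow> 'a \<Rightarrow> 'a set" where
  "adjoin K a = \<Inter>{F. is_subfield F \<and> K \<subseteq> F \<and> a \<in> F}"

text \<open>A (Krull) valuation on F[x] with values in the ordered abelian group 'g.
  Only the values at nonzero polynomials matter (the value of 0 is \<infinity>).\<close>
definition is_valuation :: "'a::field set \<Rightarrow> ('a poly \<Rightarrow> 'g::linordered_ab_group_add) \<Rightarrow> bool" where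
  "is_valuation F v \<longleftrightarrow>
     (\<forall>f\<in>polys_over F. \<forall>g\<in>polys_over F. f \<noteq> 0 \<longrightarrow> g \<noteq> 0 \<longrightarrow>
        v (f * g) = v f + v g \<and> (f + g \<noteq> 0 \<longrightarrow> min (v f) (v g) \<le> v (f + g)))"

definition value_group :: "('a::field poly \<Rightarrow> 'g) \<Rightarrow> 'a set \<Rightarrow> 'g set" where
  "value_group v L = {v [:c:] | c. c \<in> L \<and> c \<noteq> 0}"

fun nsmul :: "nat \<Rightarrow> 'g::monoid_add \<Rightarrow> 'g" where
  "nsmul 0 x = 0"
| "nsmul (Suc n) x = x + nsmul n x"

text \<open>i-th coefficient of the Q-expansion f = sum f_i Q^i (deg f_i < deg Q).\<close>
definition Q_coeff :: "'a::field poly \<Rightarrow> 'a poly \<Rightarrow> nat \<Rightarrow> 'a poly" where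
  "Q_coeff Q f i = (f div Q ^ i) mod Q"

definition trunc_Q :: "('a::field poly \<Rightarrow> 'g::linorder) \<Rightarrow> 'a poly \<Rightarrow> 'a poly \<Rightarrow> 'g" where
  "trunc_Q v Q f = Min {v (Q_coeff Q f i * Q ^ i) | i. i \<le> degree f \<and> Q_coeff Q f i \<noteq> 0}"

text \<open>mu_{x-a}(sum c_i (x-a)^i) = min (mu(c_i) + i mu(x-a)); c_i = coefficients of f(x+a).\<close>
definition trunc_lin :: "('a::field poly \<Rightarrow> 'g::linordered_ab_group_add) \<Rightarrow> 'a \<Rightarrow> 'a poly \<Rightarrow> 'g" where
  "trunc_lin v a f = Min {v [:coeff (pcompose f [:a, 1:]) i:] + nsmul i (v [:-a, 1:]) | i.
                          i \<le> degree f \<and> coeff (pcompose f [:a, 1:]) i \<noteq> 0}"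

definition hasse :: "nat \<Rightarrow> 'a::field poly \<Rightarrow> 'a poly" where
  "hasse b f = (\<Sum>i\<in>{b..degree f}. monom (of_nat (i choose b) * coeff f i) (i - b))"

text \<open>eps_ge v f Q expresses  epsilon(f) >= epsilon(Q), where
  epsilon(f) = max_{1<=b<=deg f} (v f - v (d_b f)) / b  (terms with d_b f = 0 are -\<infinity>),
  epsilon(f) = -\<infinity> for constant f.  The quotients live in the divisible hull of the
  value group; the comparison max_b A_b/b >= max_c B_c/c is unfolded by clearing
  denominators:  exists b with c*A_b >= b*B_c for all c.\<close>
definition eps_ge :: "('a::field poly \<Rightarrow> 'g::linordered_ab_group_add) \<Rightarrow> 'a poly \<Rightarrow> 'a poly \<Rightarrow> bool" where
  "eps_ge v f Q \<longleftrightarrow>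
     (if degree f = 0 then degree Q = 0
      else (\<exists>b\<in>{1..degree f}. hasse b f \<noteq> 0 \<and>
              (\<forall>c\<in>{1..degree Q}. hasse c Q \<noteq> 0 \<longrightarrow>
                 nsmul b (v Q - v (hasse c Q)) \<le> nsmul c (v f - v (hasse b f)))))"

definition is_key_poly :: "'a::field set \<Rightarrow> ('a poly \<Rightarrow> 'g::linordered_ab_group_add) \<Rightarrow> 'a poly \<Rightarrow> bool" where
  "is_key_poly K v Q \<longleftrightarrow> Q \<in> polys_over K \<and> lead_coeff Q = 1 \<and>
     (\<forall>f\<in>polys_over K. f \<noteq> 0 \<longrightarrow> eps_ge v f Q \<longrightarrow> degree Q \<le> degree f)"

definition optimizing_root :: "'a::field set \<Rightarrow> ('a poly \<Rightarrow> 'g::linorder) \<Rightarrow> 'a poly \<Rightarrow> 'a \<Rightarrow> bool" where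
  "optimizing_root Kb mu Q a \<longleftrightarrow> a \<in> Kb \<and> poly Q a = 0 \<and>
     (\<forall>c\<in>Kb. poly Q c = 0 \<longrightarrow> mu [:-c, 1:] \<le> mu [:-a, 1:])"

end

theory Submission
  imports Defs
begin

text \<open>Over the algebraic closure Q splits into factors x - q with \<mu>(x - q) \<le> \<mu>(x - a), as a is an
  optimizing root. If h \<in> K[x] has degree < deg Q, then every root b of h satisfies
  \<mu>(x - b) < \<mu>(x - a): otherwise comparing the Hasse derivatives of the two factorizations
  gives \<epsilon>(h) \<ge> \<epsilon>(Q), which is impossible for a key polynomial. Consequently \<mu>(h) = \<mu>(h(a)),
  and \<mu>_{x-a}(h) = \<mu>(h), which holds for every product of factors x - b with
  \<mu>(x - b) \<le> \<mu>(x - a), in particular for Q.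

  If deg g < ne, the Q-expansion g = \<Sum> g_i Q^i only involves i < e, and the values
  \<mu>(g_i Q^i) = \<mu>(g_i(a)) + i\<nu>(Q) are pairwise distinct because \<mu>(g_i(a)) \<in> \<mu>K(a) and e is minimal.
  So the minimum is attained by a single term, whence \<mu>(g) = \<nu>_Q(g); and \<mu>_{x-a}(g) = \<mu>(g)
  is inherited from the terms.\<close>

section \<open>Subfields and polynomials over them\<close>

locale subfield =
  fixes F :: "'a::field set"
  assumes subfield: "is_subfield F"
begin

lemma zero_mem: "0 \<in> F" and one_mem: "1 \<in> F"
  using subfield by (simp_all add: is_subfield_def)

lemma add_mem: "x \<in> F \<Longrightarrow> y \<in> F \<Longrightarrow> x + y \<in> F"
  and diff_mem: "x \<in> F \<Longrightarrow> y \<in> F \<Longrightarrow> x - y \<in> F"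
  and mult_mem: "x \<in> F \<Longrightarrow> y \<in> F \<Longrightarrow> x * y \<in> F"
  using subfield by (simp_all add: is_subfield_def)

lemma uminus_mem: "x \<in> F \<Longrightarrow> - x \<in> F"
  using diff_mem[OF zero_mem] by fastforce

lemma inverse_mem: "x \<in> F \<Longrightarrow> inverse x \<in> F"
  using subfield by (cases "x = 0") (auto simp: is_subfield_def)

lemma divide_mem: "x \<in> F \<Longrightarrow> y \<in> F \<Longrightarrow> x / y \<in> F"
  by (simp add: divide_inverse mult_mem inverse_mem)

lemma of_nat_mem: "of_nat n \<in> F"
  by (induction n) (auto simp: zero_mem one_mem add_mem)

lemma sum_mem: "(\<And>i. i \<in> A \<Longrightarrow> f i \<in> F) \<Longrightarrow> sum f A \<in> F"
  by (induction A rule: infinite_finite_induct) (auto simp: zero_mem add_mem)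

lemma prod_list_mem: "(\<And>x. x \<in> set xs \<Longrightarrow> f x \<in> F) \<Longrightarrow> (\<Prod>x\<leftarrow>xs. f x) \<in> F"
  by (induction xs) (auto simp: one_mem mult_mem)

lemma power_mem: "x \<in> F \<Longrightarrow> x ^ n \<in> F"
  by (induction n) (auto simp: one_mem mult_mem)

lemma polys_over_coeff: "p \<in> polys_over F \<Longrightarrow> coeff p i \<in> F"
  by (simp add: polys_over_def)

lemma polys_overI: "(\<And>i. coeff p i \<in> F) \<Longrightarrow> p \<in> polys_over F"
  by (simp add: polys_over_def)

lemma polys_over_zero: "0 \<in> polys_over F"
  by (rule polys_overI) (simp add: zero_mem)

lemma polys_over_const: "c \<in> F \<Longrightarrow> [:c:] \<in> polys_over F"
  by (rule polys_overI) (simp add: coeff_pCons zero_mem split: nat.split)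

lemma polys_over_one: "1 \<in> polys_over F"
  using polys_over_const[OF one_mem] by (simp add: one_pCons)

lemma polys_over_pCons_iff: "pCons c p \<in> polys_over F \<longleftrightarrow> c \<in> F \<and> p \<in> polys_over F"
proof
  assume "pCons c p \<in> polys_over F"
  then show "c \<in> F \<and> p \<in> polys_over F"
    by (metis coeff_pCons_0 coeff_pCons_Suc polys_over_coeff polys_overI)
next
  assume "c \<in> F \<and> p \<in> polys_over F"
  then show "pCons c p \<in> polys_over F"
    by (intro polys_overI) (simp add: coeff_pCons polys_over_coeff split: nat.split)
qed

lemma polys_over_add: "p \<in> polys_over F \<Longrightarrow> q \<in> polys_over F \<Longrightarrow> p + q \<in> polys_over F"
  and polys_over_diff: "p \<in> polys_over F \<Longrightarrow> q \<in> polys_over F \<Longrightarrow> p - q \<in> polys_over F"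
  and polys_over_uminus: "p \<in> polys_over F \<Longrightarrow> - p \<in> polys_over F"
  by (rule polys_overI, simp add: add_mem diff_mem uminus_mem polys_over_coeff)+

lemma polys_over_mult: "p \<in> polys_over F \<Longrightarrow> q \<in> polys_over F \<Longrightarrow> p * q \<in> polys_over F"
  by (rule polys_overI) (auto simp: coeff_mult intro!: sum_mem mult_mem polys_over_coeff)

lemma polys_over_monom: "c \<in> F \<Longrightarrow> monom c k \<in> polys_over F"
  by (rule polys_overI) (simp add: coeff_monom zero_mem)

lemma polys_over_sum: "(\<And>i. i \<in> A \<Longrightarrow> f i \<in> polys_over F) \<Longrightarrow> sum f A \<in> polys_over F"
  by (induction A rule: infinite_finite_induct) (auto simp: polys_over_zero polys_over_add)

lemma polys_over_prod_list:
  "(\<And>x. x \<in> set xs \<Longrightarrow> f x \<in> polys_over F) \<Longrightarrow> (\<Prod>x\<leftarrow>xs. f x) \<in> polys_over F"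
  by (induction xs) (auto simp: polys_over_one polys_over_mult)

lemma polys_over_power: "p \<in> polys_over F \<Longrightarrow> p ^ k \<in> polys_over F"
  by (induction k) (auto simp: polys_over_one polys_over_mult)

lemma polys_over_hasse: "p \<in> polys_over F \<Longrightarrow> hasse b p \<in> polys_over F"
  unfolding hasse_def by (intro polys_over_sum polys_over_monom mult_mem of_nat_mem polys_over_coeff)

lemma poly_mem: "p \<in> polys_over F \<Longrightarrow> x \<in> F \<Longrightarrow> poly p x \<in> F"
  by (simp add: poly_altdef sum_mem mult_mem power_mem polys_over_coeff)

lemma polys_over_pcompose:
  "p \<in> polys_over F \<Longrightarrow> q \<in> polys_over F \<Longrightarrow> p \<circ>\<^sub>p q \<in> polys_over F"
  by (induction p) (auto simp: pcompose_pCons polys_over_pCons_iff polys_over_zero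
      intro!: polys_over_add polys_over_const polys_over_mult)

lemma polys_over_synthetic_div:
  "p \<in> polys_over F \<Longrightarrow> c \<in> F \<Longrightarrow> synthetic_div p c \<in> polys_over F"
  by (induction p) (auto simp: polys_over_pCons_iff polys_over_zero poly_mem)

end

section \<open>Valuations on polynomial rings\<close>

lemma nsmul_add_left: "nsmul (m + n) (x::'g::monoid_add) = nsmul m x + nsmul n x"
  by (induction m) (auto simp: add.assoc)

lemma nsmul_mult: "nsmul (m * n) (x::'g::monoid_add) = nsmul m (nsmul n x)"
  by (induction m) (auto simp: nsmul_add_left)

lemma nsmul_commute: "nsmul m (nsmul n (x::'g::monoid_add)) = nsmul n (nsmul m x)"
  by (metis mult.commute nsmul_mult)

lemma nsmul_mono: "(x::'g::ordered_ab_group_add) \<le> y \<Longrightarrow> nsmul n x \<le> nsmul n y"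
  by (induction n) (auto intro: add_mono)

locale poly_valuation = subfield F
  for F :: "'a::field set" +
  fixes v :: "'a poly \<Rightarrow> 'g::linordered_ab_group_add"
  assumes valuation: "is_valuation F v"
begin

lemma val_mult:
  "p \<in> polys_over F \<Longrightarrow> q \<in> polys_over F \<Longrightarrow> p \<noteq> 0 \<Longrightarrow> q \<noteq> 0 \<Longrightarrow> v (p * q) = v p + v q"
  using valuation by (simp add: is_valuation_def)

lemma val_add_ge_min:
  "p \<in> polys_over F \<Longrightarrow> q \<in> polys_over F \<Longrightarrow> p \<noteq> 0 \<Longrightarrow> q \<noteq> 0 \<Longrightarrow> p + q \<noteq> 0 \<Longrightarrow>
     min (v p) (v q) \<le> v (p + q)"
  using valuation by (simp add: is_valuation_def)

lemma val_one: "v 1 = 0"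
  using val_mult[of 1 1] polys_over_one by simp

lemma val_uminus:
  assumes p: "p \<in> polys_over F" "p \<noteq> 0"
  shows "v (- p) = v p"
proof -
  have m1: "[:-1:] \<in> polys_over F" by (intro polys_over_const uminus_mem one_mem)
  have "v [:-1:] + v [:-1:] = 0"
    using val_mult[OF m1 m1] val_one by (simp add: one_pCons)
  then have "v [:-1:] = 0"
    by (metis add_less_zeroD add_neg_neg add_pos_pos less_irrefl linorder_neqE)
  moreover have "- p = [:-1:] * p" by simp
  ultimately show ?thesis using val_mult[OF m1 p(1)] p(2) by simp
qed

lemma val_add_dominant:
  assumes "p \<in> polys_over F" "q \<in> polys_over F" "p \<noteq> 0" and less: "q \<noteq> 0 \<Longrightarrow> v p < v q"
  shows "p + q \<noteq> 0 \<and> v (p + q) = v p"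
proof (cases "q = 0")
  case False
  have pq: "p + q \<noteq> 0"
  proof
    assume "p + q = 0"
    then have "q = - p" by (simp add: add_eq_0_iff)
    then show False using less False val_uminus assms by auto
  qed
  have "v p \<le> v (p + q)" using val_add_ge_min[of p q] assms False pq by auto
  moreover have "min (v (p + q)) (v (- q)) \<le> v p"
    using val_add_ge_min[of "p + q" "- q"] assms False pq
    by (simp add: polys_over_add polys_over_uminus)
  then have "v (p + q) \<le> v p" using val_uminus assms less False by (auto simp: min_def split: if_splits)
  ultimately show ?thesis using pq by simp
qed (use assms in simp)

lemma val_add_ge:
  "p \<in> polys_over F \<Longrightarrow> q \<in> polys_over F \<Longrightarrow> (p \<noteq> 0 \<Longrightarrow> B \<le> v p) \<Longrightarrow> (q \<noteq> 0 \<Longrightarrow> B \<le> v q) \<Longrightarrow>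
     p + q \<noteq> 0 \<Longrightarrow> B \<le> v (p + q)"
  using val_add_ge_min[of p q] by (cases "p = 0"; cases "q = 0") (auto simp: min_le_iff_disj)

lemma val_add_gt:
  "p \<in> polys_over F \<Longrightarrow> q \<in> polys_over F \<Longrightarrow> (p \<noteq> 0 \<Longrightarrow> B < v p) \<Longrightarrow> (q \<noteq> 0 \<Longrightarrow> B < v q) \<Longrightarrow>
     p + q \<noteq> 0 \<Longrightarrow> B < v (p + q)"
  using val_add_ge_min[of p q] by (cases "p = 0"; cases "q = 0") (auto simp: min_le_iff_disj)

lemma val_sum_ge:
  "(\<And>i. i \<in> A \<Longrightarrow> f i \<in> polys_over F) \<Longrightarrow> (\<And>i. i \<in> A \<Longrightarrow> f i \<noteq> 0 \<Longrightarrow> B \<le> v (f i)) \<Longrightarrow>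
     sum f A \<noteq> 0 \<Longrightarrow> B \<le> v (sum f A)"
proof (induction A rule: infinite_finite_induct)
  case (insert x A)
  then show ?case by (auto intro!: val_add_ge polys_over_sum)
qed simp_all

lemma val_sum_gt:
  "(\<And>i. i \<in> A \<Longrightarrow> f i \<in> polys_over F) \<Longrightarrow> (\<And>i. i \<in> A \<Longrightarrow> f i \<noteq> 0 \<Longrightarrow> B < v (f i)) \<Longrightarrow>
     sum f A \<noteq> 0 \<Longrightarrow> B < v (sum f A)"
proof (induction A rule: infinite_finite_induct)
  case (insert x A)
  then show ?case by (auto intro!: val_add_gt polys_over_sum)
qed simp_all

lemma val_power: "p \<in> polys_over F \<Longrightarrow> p \<noteq> 0 \<Longrightarrow> v (p ^ k) = nsmul k (v p)"
  by (induction k) (auto simp: val_one val_mult polys_over_power)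

lemma val_prod_list:
  "(\<And>x. x \<in> set xs \<Longrightarrow> f x \<in> polys_over F \<and> f x \<noteq> 0) \<Longrightarrow>
     v (\<Prod>x\<leftarrow>xs. f x) = (\<Sum>x\<leftarrow>xs. v (f x))"
proof (induction xs)
  case (Cons x xs)
  have "(\<Prod>x\<leftarrow>xs. f x) \<in> polys_over F" "(\<Prod>x\<leftarrow>xs. f x) \<noteq> 0"
    using Cons.prems by (auto intro: polys_over_prod_list simp: prod_list_zero_iff)
  then show ?case using Cons by (simp add: val_mult)
qed (simp add: val_one)

lemma val_smult:
  "c \<in> F \<Longrightarrow> c \<noteq> 0 \<Longrightarrow> p \<in> polys_over F \<Longrightarrow> p \<noteq> 0 \<Longrightarrow> v (smult c p) = v [:c:] + v p"
  using val_mult[of "[:c:]" p] polys_over_const by simp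

lemma val_const_mult:
  "x \<in> F \<Longrightarrow> y \<in> F \<Longrightarrow> x \<noteq> 0 \<Longrightarrow> y \<noteq> 0 \<Longrightarrow> v [:x * y:] = v [:x:] + v [:y:]"
  using val_mult[of "[:x:]" "[:y:]"] polys_over_const by (simp add: mult.commute)

lemma val_sum_distinct:
  assumes A: "finite A" "A \<noteq> {}" and f: "\<And>i. i \<in> A \<Longrightarrow> f i \<in> polys_over F \<and> f i \<noteq> 0"
    and inj: "inj_on (\<lambda>i. v (f i)) A"
  shows "sum f A \<noteq> 0 \<and> v (sum f A) = Min ((\<lambda>i. v (f i)) ` A)"
proof -
  have "Min ((\<lambda>i. v (f i)) ` A) \<in> (\<lambda>i. v (f i)) ` A"
    using A by (intro Min_in) auto
  then obtain i0 where i0: "i0 \<in> A" "v (f i0) = Min ((\<lambda>i. v (f i)) ` A)"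
    by auto
  have rest_gt: "v (f i0) < v (f i)" if "i \<in> A - {i0}" for i
    using that i0 inj A(1) by (metis DiffE Min_le finite_imageI image_eqI inj_on_eq_iff
        order_le_imp_less_or_eq singletonI)
  have "f i0 + sum f (A - {i0}) \<noteq> 0 \<and> v (f i0 + sum f (A - {i0})) = v (f i0)"
    using f i0(1) rest_gt
    by (intro val_add_dominant val_sum_gt polys_over_sum) auto
  then show ?thesis using i0 A(1) by (simp add: sum.remove)
qed

end

section \<open>Linear factors and Hasse derivatives\<close>

definition x_minus :: "'a::comm_ring_1 \<Rightarrow> 'a poly" where
  "x_minus b = [:-b, 1:]"

lemma x_minus_nonzero [simp]: "x_minus b \<noteq> 0"
  by (simp add: x_minus_def)

lemma poly_x_minus [simp]: "poly (x_minus b) x = x - b"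
  by (simp add: x_minus_def)

lemma prod_x_minus_nonzero: "(\<Prod>b\<leftarrow>bs. x_minus b) \<noteq> (0::'a::idom poly)"
  by (induction bs) auto

lemma degree_prod_x_minus: "degree (\<Prod>b\<leftarrow>bs. x_minus b) = length (bs::'a::idom list)"
proof (induction bs)
  case (Cons b bs)
  then show ?case
    using degree_mult_eq[OF x_minus_nonzero prod_x_minus_nonzero, of b bs] by (simp add: x_minus_def)
qed simp

lemma lead_coeff_x_minus [simp]: "lead_coeff (x_minus b) = (1::'a::idom)"
  by (simp add: x_minus_def)

lemma lead_coeff_prod_x_minus: "lead_coeff (\<Prod>b\<leftarrow>bs. x_minus b) = (1::'a::idom)"
  by (induction bs) (auto simp: lead_coeff_mult)

lemma poly_prod_x_minus: "poly (\<Prod>b\<leftarrow>bs. x_minus b) x = (\<Prod>b\<leftarrow>bs. x - (b::'a::idom))"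
  by (induction bs) auto

lemma (in subfield) polys_over_x_minus: "b \<in> F \<Longrightarrow> x_minus b \<in> polys_over F"
  unfolding x_minus_def by (simp add: polys_over_pCons_iff uminus_mem one_mem polys_over_zero)

lemma (in subfield) polys_over_prod_x_minus:
  "set bs \<subseteq> F \<Longrightarrow> (\<Prod>b\<leftarrow>bs. x_minus b) \<in> polys_over F"
  by (auto intro!: polys_over_prod_list polys_over_x_minus)

lemma algebraic_closure_factorization:
  assumes "is_algebraic_closure K Kb" "p \<in> polys_over Kb" "p \<noteq> 0"
  shows "\<exists>c bs. c \<in> Kb \<and> c \<noteq> 0 \<and> set bs \<subseteq> Kb \<and> p = smult c (\<Prod>b\<leftarrow>bs. x_minus b)"
  using assms(2,3)
proof (induction "degree p" arbitrary: p rule: less_induct)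
  case less
  interpret Kb: subfield Kb
    using assms(1) by unfold_locales (simp add: is_algebraic_closure_def)
  show ?case
  proof (cases "degree p = 0")
    case True
    then obtain c where "p = [:c:]" by (metis degree_eq_zeroE)
    then show ?thesis using less.prems Kb.polys_over_coeff[of p 0]
      by (intro exI[of _ c] exI[of _ "[]"]) auto
  next
    case False
    then obtain y where y: "y \<in> Kb" "poly p y = 0"
      using assms(1) less.prems unfolding is_algebraic_closure_def by auto
    define q where "q = synthetic_div p y"
    have p_eq: "p = x_minus y * q"
      using synthetic_div_correct'[of y p] y by (simp add: q_def x_minus_def)
    have "q \<in> polys_over Kb"
      using Kb.polys_over_synthetic_div less.prems(1) y(1) by (simp add: q_def)
    moreover have "q \<noteq> 0" using p_eq less.prems(2) by auto
    moreover have "degree q < degree p" using False by (simp add: q_def degree_synthetic_div)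
    ultimately obtain c bs
      where "c \<in> Kb" "c \<noteq> 0" "set bs \<subseteq> Kb" "q = smult c (\<Prod>b\<leftarrow>bs. x_minus b)"
      using less.hyps by blast
    then show ?thesis using p_eq y
      by (intro exI[of _ c] exI[of _ "y # bs"]) (auto simp: mult_smult_right)
  qed
qed

lemma coeff_hasse: "coeff (hasse b f) k = of_nat ((k + b) choose b) * coeff f (k + b)"
proof -
  have "coeff (hasse b f) k =
      (\<Sum>i\<in>{b..degree f}. if i = k + b then of_nat (i choose b) * coeff f i else 0)"
    unfolding hasse_def coeff_sum coeff_monom by (intro sum.cong refl) auto
  also have "\<dots> = of_nat ((k + b) choose b) * coeff f (k + b)"
    by (auto simp: coeff_eq_0)
  finally show ?thesis .
qed

lemma hasse_0 [simp]: "hasse 0 f = f"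
  by (rule poly_eqI) (simp add: coeff_hasse)

lemma hasse_smult: "hasse b (smult c f) = smult c (hasse b f)"
  by (rule poly_eqI) (simp add: coeff_hasse algebra_simps)

lemma hasse_one: "hasse s (1::'a::field poly) = (if s = 0 then 1 else 0)"
  by (rule poly_eqI) (auto simp: coeff_hasse coeff_1)

lemma hasse_x_minus_mult:
  "hasse (Suc r) (x_minus b * P) = x_minus b * hasse (Suc r) P + hasse r P"
proof (rule poly_eqI)
  fix k
  have coeff_x_minus_mult: "coeff (x_minus b * R) j = - b * coeff R j + (case j of 0 \<Rightarrow> 0 | Suc m \<Rightarrow> coeff R m)"
    for R j by (simp add: x_minus_def coeff_pCons split: nat.split)
  show "coeff (hasse (Suc r) (x_minus b * P)) k = coeff (x_minus b * hasse (Suc r) P + hasse r P) k"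
    by (cases k) (simp_all only: coeff_add coeff_x_minus_mult coeff_hasse add_Suc_shift nat.case,
        simp_all add: algebra_simps)
qed

context poly_valuation
begin

definition hasse_profile :: "'g \<Rightarrow> nat \<Rightarrow> 'a poly \<Rightarrow> bool" where
  "hasse_profile B t P \<longleftrightarrow>
     (\<forall>s. hasse s P \<noteq> 0 \<longrightarrow> v P - nsmul s B \<le> v (hasse s P)) \<and>
     (\<forall>s>t. hasse s P \<noteq> 0 \<longrightarrow> v P - nsmul s B < v (hasse s P)) \<and>
     hasse t P \<noteq> 0 \<and> v (hasse t P) = v P - nsmul t B"

lemma hasse_profileD:
  assumes "hasse_profile B t P"
  shows "hasse s P \<noteq> 0 \<Longrightarrow> v P - nsmul s B \<le> v (hasse s P)"
    and "t < s \<Longrightarrow> hasse s P \<noteq> 0 \<Longrightarrow> v P - nsmul s B < v (hasse s P)"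
    and "hasse t P \<noteq> 0" "v (hasse t P) = v P - nsmul t B"
  using assms by (auto simp: hasse_profile_def)

text \<open>Multiplying by x - b turns each excess v(\<partial>_s P) - (v P - sB) into the excesses of the two
  terms of \<partial>_{r+1}((x - b)P) = (x - b)\<partial>_{r+1}P + \<partial>_r P: unchanged for the first, raised by
  B - v(x - b) \<ge> 0 for the second.\<close>
lemma hasse_mult_x_minus_excess:
  assumes b: "b \<in> F" and P: "P \<in> polys_over F" "P \<noteq> 0"
  shows "hasse s P \<noteq> 0 \<Longrightarrow> v (x_minus b * hasse s P) - (v (x_minus b * P) - nsmul s B)
           = v (hasse s P) - (v P - nsmul s B)"
    and "v (hasse r P) - (v (x_minus b * P) - nsmul (Suc r) B)
           = (v (hasse r P) - (v P - nsmul r B)) + (B - v (x_minus b))"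
  using val_mult[OF polys_over_x_minus[OF b] polys_over_hasse[OF P(1)]]
    val_mult[OF polys_over_x_minus[OF b] P(1)] P(2)
  by (simp_all add: algebra_simps)

lemma hasse_profile_lower_mult_x_minus:
  assumes b: "b \<in> F" and P: "P \<in> polys_over F" "P \<noteq> 0"
    and XB: "v (x_minus b) \<le> B" and prof: "hasse_profile B t P"
    and ne: "hasse s (x_minus b * P) \<noteq> 0"
  shows "v (x_minus b * P) - nsmul s B \<le> v (hasse s (x_minus b * P))"
proof (cases s)
  case (Suc r)
  note lower = hasse_profileD(1)[OF prof]
  have "v (x_minus b * P) - nsmul (Suc r) B \<le> v (x_minus b * hasse (Suc r) P + hasse r P)"
  proof (rule val_add_ge)
    show "v (x_minus b * P) - nsmul (Suc r) B \<le> v (x_minus b * hasse (Suc r) P)"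
      if "x_minus b * hasse (Suc r) P \<noteq> 0"
      using that hasse_mult_x_minus_excess(1)[OF b P, of "Suc r" B] lower[of "Suc r"]
      by (metis diff_ge_0_iff_ge mult_zero_right)
    show "v (x_minus b * P) - nsmul (Suc r) B \<le> v (hasse r P)" if "hasse r P \<noteq> 0"
      using that hasse_mult_x_minus_excess(2)[OF b P, of r B] lower[of r] XB
      by (metis add_nonneg_nonneg diff_ge_0_iff_ge)
  qed (use b P ne Suc in \<open>simp_all add: hasse_x_minus_mult polys_over_hasse polys_over_mult
      polys_over_x_minus\<close>)
  then show ?thesis using Suc by (simp add: hasse_x_minus_mult)
qed simp

lemma hasse_profile_strict_mult_x_minus:
  assumes b: "b \<in> F" and P: "P \<in> polys_over F" "P \<noteq> 0"
    and XB: "v (x_minus b) \<le> B" and prof: "hasse_profile B t P"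
    and ts: "(if v (x_minus b) = B then Suc t else t) < s" and ne: "hasse s (x_minus b * P) \<noteq> 0"
  shows "v (x_minus b * P) - nsmul s B < v (hasse s (x_minus b * P))"
proof -
  note lower = hasse_profileD(1)[OF prof] and strict = hasse_profileD(2)[OF prof]
  obtain r where r: "s = Suc r" using ts by (cases s) auto
  have "t < Suc r" using ts r by (simp split: if_splits)
  have "v (x_minus b * P) - nsmul (Suc r) B < v (x_minus b * hasse (Suc r) P + hasse r P)"
  proof (rule val_add_gt)
    show "v (x_minus b * P) - nsmul (Suc r) B < v (x_minus b * hasse (Suc r) P)"
      if "x_minus b * hasse (Suc r) P \<noteq> 0"
      using that hasse_mult_x_minus_excess(1)[OF b P, of "Suc r" B] strict[OF \<open>t < Suc r\<close>]
      by (metis diff_gt_0_iff_gt mult_zero_right)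
    show "v (x_minus b * P) - nsmul (Suc r) B < v (hasse r P)" if "hasse r P \<noteq> 0"
    proof (cases "v (x_minus b) = B")
      case True
      then have "0 < v (hasse r P) - (v P - nsmul r B)"
        using that strict[of r] ts r by simp
      then show ?thesis using hasse_mult_x_minus_excess(2)[OF b P, of r B] XB
        by (metis add_pos_nonneg diff_ge_0_iff_ge diff_gt_0_iff_gt)
    next
      case False
      then have "0 < B - v (x_minus b)" using XB by simp
      then show ?thesis using that hasse_mult_x_minus_excess(2)[OF b P, of r B] lower[of r]
        by (metis add_nonneg_pos diff_ge_0_iff_ge diff_gt_0_iff_gt)
    qed
  qed (use b P ne r in \<open>simp_all add: hasse_x_minus_mult polys_over_hasse polys_over_mult
      polys_over_x_minus\<close>)
  then show ?thesis using r by (simp add: hasse_x_minus_mult)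
qed

lemma hasse_profile_exact_mult_x_minus:
  assumes b: "b \<in> F" and P: "P \<in> polys_over F" "P \<noteq> 0"
    and XB: "v (x_minus b) \<le> B" and prof: "hasse_profile B t P"
  defines "t' \<equiv> if v (x_minus b) = B then Suc t else t"
  shows "hasse t' (x_minus b * P) \<noteq> 0 \<and>
    v (hasse t' (x_minus b * P)) = v (x_minus b * P) - nsmul t' B"
proof -
  define L where "L s = v (x_minus b * P) - nsmul s B" for s
  have hP: "hasse s P \<in> polys_over F" "x_minus b * hasse s P \<in> polys_over F" for s
    using polys_over_hasse[OF P(1)] polys_over_mult[OF polys_over_x_minus[OF b]] by auto
  note lower = hasse_profileD(1)[OF prof] and strict = hasse_profileD(2)[OF prof]
    and exact = hasse_profileD(3,4)[OF prof]
  note excess = hasse_mult_x_minus_excess[OF b P, where B = B, folded L_def]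
  show ?thesis
  proof (cases "v (x_minus b) = B")
    case True
    have ht: "v (hasse t P) = L (Suc t)"
      using excess(2)[of t] exact True by (metis add.right_neutral diff_eq_diff_eq diff_self)
    have "L (Suc t) < v (x_minus b * hasse (Suc t) P)" if "x_minus b * hasse (Suc t) P \<noteq> 0"
      using that excess(1)[of "Suc t"] strict[of "Suc t"] by (metis diff_gt_0_iff_gt lessI mult_zero_right)
    then have "hasse t P + x_minus b * hasse (Suc t) P \<noteq> 0 \<and>
        v (hasse t P + x_minus b * hasse (Suc t) P) = v (hasse t P)"
      using exact ht by (intro val_add_dominant hP) simp_all
    then show ?thesis using True ht by (simp add: t'_def L_def hasse_x_minus_mult add.commute)
  next
    case False
    show ?thesis
    proof (cases t)
      case 0
      then show ?thesis using False P(2) by (simp add: t'_def)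
    next
      case (Suc r)
      have ht: "v (x_minus b * hasse t P) = L t"
        using excess(1)[of t] exact by (metis diff_self eq_iff_diff_eq_0)
      have "0 < B - v (x_minus b)" using XB False by simp
      then have "L t < v (hasse r P)" if "hasse r P \<noteq> 0"
        using that excess(2)[of r] lower[of r] Suc
        by (metis add_nonneg_pos diff_ge_0_iff_ge diff_gt_0_iff_gt)
      then have "x_minus b * hasse t P + hasse r P \<noteq> 0 \<and>
          v (x_minus b * hasse t P + hasse r P) = v (x_minus b * hasse t P)"
        using exact ht by (intro val_add_dominant hP) simp_all
      then show ?thesis using False Suc ht by (simp add: t'_def L_def hasse_x_minus_mult)
    qed
  qed
qed

lemma hasse_profile_mult_x_minus:
  assumes "b \<in> F" "P \<in> polys_over F" "P \<noteq> 0" "v (x_minus b) \<le> B" "hasse_profile B t P"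
  shows "hasse_profile B (if v (x_minus b) = B then Suc t else t) (x_minus b * P)"
  using hasse_profile_lower_mult_x_minus[OF assms] hasse_profile_strict_mult_x_minus[OF assms]
    hasse_profile_exact_mult_x_minus[OF assms]
  unfolding hasse_profile_def by blast

lemma hasse_profile_prod_x_minus:
  assumes "set bs \<subseteq> F" "\<forall>b\<in>set bs. v (x_minus b) \<le> B"
  shows "hasse_profile B (length (filter (\<lambda>b. v (x_minus b) = B) bs)) (\<Prod>b\<leftarrow>bs. x_minus b)"
  using assms
proof (induction bs)
  case Nil
  then show ?case by (simp add: hasse_profile_def hasse_one val_one)
next
  case (Cons b bs)
  then have "hasse_profile B (if v (x_minus b) = B then Suc (length (filter (\<lambda>b. v (x_minus b) = B) bs))
      else length (filter (\<lambda>b. v (x_minus b) = B) bs)) (x_minus b * (\<Prod>b\<leftarrow>bs. x_minus b))"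
    by (intro hasse_profile_mult_x_minus) (simp_all add: polys_over_prod_x_minus prod_x_minus_nonzero)
  then show ?case by (simp split: if_splits)
qed

end

section \<open>Expansions in powers of Q\<close>

context subfield
begin

lemma polys_over_division:
  assumes Q: "Q \<in> polys_over F" "lead_coeff Q = 1" and p: "p \<in> polys_over F"
  shows "\<exists>q r. q \<in> polys_over F \<and> r \<in> polys_over F \<and> p = q * Q + r \<and> (r = 0 \<or> degree r < degree Q)"
  using p
proof (induction "degree p" arbitrary: p rule: less_induct)
  case less
  show ?case
  proof (cases "p = 0 \<or> degree p < degree Q")
    case True
    then show ?thesis using less.prems polys_over_zero by (intro exI[of _ 0] exI[of _ p]) auto
  next
    case False
    then have p0: "p \<noteq> 0" and dge: "degree Q \<le> degree p" by auto
    define m where "m = monom (lead_coeff p) (degree p - degree Q)"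
    define p' where "p' = p - m * Q"
    have mF: "m \<in> polys_over F" unfolding m_def by (intro polys_over_monom polys_over_coeff less.prems)
    have p'F: "p' \<in> polys_over F"
      unfolding p'_def by (intro polys_over_diff polys_over_mult less.prems mF Q(1))
    have "degree (m * Q) \<le> degree p"
      using degree_mult_le[of m Q] degree_monom_le[of "lead_coeff p" "degree p - degree Q"] dge
      unfolding m_def by linarith
    then have "degree p' \<le> degree p" unfolding p'_def by (simp add: degree_diff_le)
    moreover have "coeff p' (degree p) = 0"
      unfolding p'_def m_def using dge Q(2) by (simp add: coeff_monom_mult)
    ultimately have "p' = 0 \<or> degree p' < degree p"
      by (metis leading_coeff_0_iff order_le_imp_less_or_eq)
    then obtain q r where qr: "q \<in> polys_over F" "r \<in> polys_over F" "p' = q * Q + r"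
        "r = 0 \<or> degree r < degree Q"
      using less.hyps[OF _ p'F] polys_over_zero by (metis add.right_neutral mult_zero_left)
    then show ?thesis using polys_over_add[OF qr(1) mF]
      by (intro exI[of _ "q + m"] exI[of _ r]) (auto simp: p'_def algebra_simps)
  qed
qed

lemma polys_over_div_mod:
  assumes Q: "Q \<in> polys_over F" "lead_coeff Q = 1" and p: "p \<in> polys_over F"
  shows "p div Q \<in> polys_over F \<and> p mod Q \<in> polys_over F"
proof -
  obtain q r where qr: "q \<in> polys_over F" "r \<in> polys_over F" "p = q * Q + r"
      "r = 0 \<or> degree r < degree Q"
    using polys_over_division[OF Q p] by blast
  have "(p div Q, p mod Q) = (q, r)"
  proof (induction rule: euclidean_relation_polyI)
    case divides
    then have "Q dvd r" using qr(3) by (metis dvd_add_right_iff dvd_triv_right)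
    then have "r = 0" using qr(4) dvd_imp_degree_le[of Q r] by (meson not_le)
    then show ?case using qr by simp
  qed (use qr Q(2) in auto)
  then show ?thesis using qr by simp
qed

lemma polys_over_Q_coeff:
  assumes "Q \<in> polys_over F" "lead_coeff Q = 1" "g \<in> polys_over F"
  shows "Q_coeff Q g i \<in> polys_over F"
proof -
  have "g div Q ^ i \<in> polys_over F"
  proof (induction i)
    case (Suc i)
    then show ?case
      using polys_over_div_mod[OF assms(1,2)] poly_div_mult_right[of g "Q ^ i" Q]
      by (simp only: power_Suc2)
  qed (simp add: assms(3))
  then show ?thesis using polys_over_div_mod[OF assms(1,2)] by (simp add: Q_coeff_def)
qed

end

lemma Q_expansion_remainder:
  "g = (\<Sum>i<N. Q_coeff Q g i * Q ^ i) + (g div Q ^ N) * Q ^ N"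
proof (induction N)
  case (Suc N)
  have "g div Q ^ N = (g div Q ^ Suc N) * Q + Q_coeff Q g N"
    using div_mult_mod_eq[of "g div Q ^ N" Q] poly_div_mult_right[of g "Q ^ N" Q]
    by (simp only: Q_coeff_def power_Suc2)
  then have "(g div Q ^ N) * Q ^ N = Q_coeff Q g N * Q ^ N + (g div Q ^ Suc N) * Q ^ Suc N"
    by (simp add: algebra_simps power_Suc2)
  then show ?case using Suc by (simp add: add.assoc)
qed simp

lemma Q_expansion:
  assumes "0 < degree Q"
  shows "g = (\<Sum>i\<le>degree g. Q_coeff Q g i * Q ^ i)"
proof -
  have "Suc (degree g) * 1 \<le> Suc (degree g) * degree Q" using assms by (intro mult_le_mono2) simp
  moreover have "degree (Q ^ Suc (degree g)) = Suc (degree g) * degree Q"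
    using assms by (intro degree_power_eq) auto
  ultimately have "degree g < degree (Q ^ Suc (degree g))" by simp
  then have "g div Q ^ Suc (degree g) = 0" by (rule div_poly_less)
  then show ?thesis using Q_expansion_remainder[where g = g and Q = Q and N = "Suc (degree g)"]
    by (simp only: lessThan_Suc_atMost) simp
qed

lemma Q_coeff_eq_0:
  assumes "degree g < degree Q * e" "e \<le> i"
  shows "Q_coeff Q g i = 0"
proof (cases "Q = 0")
  case False
  have "degree Q * e \<le> degree (Q ^ i)"
    using assms(2) False by (simp add: degree_power_eq mult.commute)
  then have "g div Q ^ i = 0" using assms(1) by (intro div_poly_less) linarith
  then show ?thesis by (simp add: Q_coeff_def)
qed (use assms in simp)

lemma degree_Q_coeff_less: "Q \<noteq> 0 \<Longrightarrow> Q_coeff Q g i \<noteq> 0 \<Longrightarrow> degree (Q_coeff Q g i) < degree Q"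
  unfolding Q_coeff_def using degree_mod_less by blast

section \<open>Key polynomials and optimizing roots\<close>

text \<open>In terms of \<epsilon>: \<epsilon>(h) \<ge> (v h - v(\<partial>_t h))/t = B \<ge> \<epsilon>(Q).\<close>
lemma eps_ge_by_hasse_bounds:
  fixes v :: "'a::field poly \<Rightarrow> 'g::linordered_ab_group_add"
  assumes t: "t \<in> {1..degree h}" "hasse t h \<noteq> 0" "v (hasse t h) = v h - nsmul t B"
    and Q: "\<And>c. hasse c Q \<noteq> 0 \<Longrightarrow> v Q - v (hasse c Q) \<le> nsmul c B"
  shows "eps_ge v h Q"
proof -
  have "nsmul t (v Q - v (hasse c Q)) \<le> nsmul c (v h - v (hasse t h))" if "hasse c Q \<noteq> 0" for c
  proof -
    have "nsmul t (v Q - v (hasse c Q)) \<le> nsmul t (nsmul c B)"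
      using Q[OF that] by (rule nsmul_mono)
    also have "\<dots> = nsmul c (v h - v (hasse t h))" using t(3) by (simp add: nsmul_commute)
    finally show ?thesis .
  qed
  then show ?thesis using t unfolding eps_ge_def by auto
qed

locale key_poly_setting =
  fixes K Kb :: "'a::field set" and nu mu :: "'a poly \<Rightarrow> 'g::linordered_ab_group_add"
    and Q :: "'a poly" and a :: 'a
  assumes closure: "is_algebraic_closure K Kb"
    and mu_valuation: "is_valuation Kb mu"
    and mu_extends_nu: "\<forall>f\<in>polys_over K. f \<noteq> 0 \<longrightarrow> mu f = nu f"
    and key: "is_key_poly K nu Q"
    and optimizing: "optimizing_root Kb mu Q a"

sublocale key_poly_setting \<subseteq> K: subfield K
  using closure by unfold_locales (simp add: is_algebraic_closure_def)

sublocale key_poly_setting \<subseteq> Kb: poly_valuation Kb mu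
  using closure mu_valuation by unfold_locales (simp_all add: is_algebraic_closure_def)

context key_poly_setting
begin

lemma polys_over_K_imp_Kb: "p \<in> polys_over K \<Longrightarrow> p \<in> polys_over Kb"
  using closure by (auto simp: polys_over_def is_algebraic_closure_def)

lemma nu_eq_mu: "f \<in> polys_over K \<Longrightarrow> f \<noteq> 0 \<Longrightarrow> nu f = mu f"
  using mu_extends_nu by simp

lemma Q_in_K: "Q \<in> polys_over K" and Q_monic: "lead_coeff Q = 1"
  using key by (simp_all add: is_key_poly_def)

lemma Q_nonzero: "Q \<noteq> 0"
  using Q_monic by auto

lemma a_in_Kb: "a \<in> Kb" and Q_root_a: "poly Q a = 0"
  using optimizing by (simp_all add: optimizing_root_def)

lemma degree_Q_pos: "0 < degree Q"
  using Q_monic Q_root_a by (cases "degree Q") (auto elim: degree_eq_zeroE)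

definition \<delta> :: 'g where
  "\<delta> = mu (x_minus a)"

lemma Q_factorization:
  obtains qs where "set qs \<subseteq> Kb" "Q = (\<Prod>q\<leftarrow>qs. x_minus q)" "\<forall>q\<in>set qs. mu (x_minus q) \<le> \<delta>"
proof -
  obtain c qs where c: "c \<in> Kb" "set qs \<subseteq> Kb" "Q = smult c (\<Prod>q\<leftarrow>qs. x_minus q)"
    using algebraic_closure_factorization[OF closure polys_over_K_imp_Kb[OF Q_in_K] Q_nonzero]
    by blast
  have "c = 1" using Q_monic c(3) by (metis lead_coeff_smult lead_coeff_prod_x_minus mult.right_neutral)
  then have Q_eq: "Q = (\<Prod>q\<leftarrow>qs. x_minus q)" using c(3) by simp
  have "mu (x_minus q) \<le> \<delta>" if "q \<in> set qs" for q
  proof -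
    have "poly Q q = 0" using that Q_eq by (auto simp: poly_prod_x_minus prod_list_zero_iff)
    then show ?thesis
      using optimizing that c(2) by (auto simp: optimizing_root_def \<delta>_def x_minus_def)
  qed
  then show ?thesis using that c(2) Q_eq by blast
qed

text \<open>This is where Q being a key polynomial enters: a root b of h with
  \<mu>(x - b) \<ge> \<mu>(x - a) would force \<epsilon>(h) \<ge> \<epsilon>(Q).\<close>
lemma roots_of_small_degree_farther:
  assumes h: "h \<in> polys_over K" "h \<noteq> 0" "degree h < degree Q"
    and fact: "c \<in> Kb" "c \<noteq> 0" "set bs \<subseteq> Kb" "h = smult c (\<Prod>b\<leftarrow>bs. x_minus b)"
  shows "\<forall>b\<in>set bs. mu (x_minus b) < \<delta>"
proof (rule ccontr)
  assume "\<not> (\<forall>b\<in>set bs. mu (x_minus b) < \<delta>)"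
  then obtain b0 where b0: "b0 \<in> set bs" "\<delta> \<le> mu (x_minus b0)" by auto
  define B where "B = Max ((\<lambda>b. mu (x_minus b)) ` set bs)"
  define t where "t = length (filter (\<lambda>b. mu (x_minus b) = B) bs)"
  define P where "P = (\<Prod>b\<leftarrow>bs. x_minus b)"
  have B_ge: "\<forall>b\<in>set bs. mu (x_minus b) \<le> B" unfolding B_def by simp
  have "B \<in> (\<lambda>b. mu (x_minus b)) ` set bs" unfolding B_def using b0 by (intro Max_in) auto
  then have "1 \<le> t" unfolding t_def by (auto simp: Suc_le_eq filter_empty_conv)
  moreover have "t \<le> degree h" unfolding t_def using fact by (simp add: degree_prod_x_minus)
  moreover have "\<delta> \<le> B" using b0 B_ge order.trans by blast
  moreover have P: "P \<in> polys_over Kb" "P \<noteq> 0"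
    using Kb.polys_over_prod_x_minus[OF fact(3)] by (simp_all add: P_def prod_x_minus_nonzero)
  moreover have "hasse t P \<noteq> 0" "mu (hasse t P) = mu P - nsmul t B"
    using Kb.hasse_profile_prod_x_minus[OF fact(3) B_ge]
    by (simp_all add: Kb.hasse_profile_def P_def t_def)
  ultimately have t: "t \<in> {1..degree h}" "hasse t h \<noteq> 0" "mu (hasse t h) = mu h - nsmul t B"
    using fact Kb.val_smult[OF fact(1,2) P] Kb.val_smult[OF fact(1,2) Kb.polys_over_hasse[OF P(1)]]
    by (simp_all add: hasse_smult P_def[symmetric])
  obtain qs where qs: "set qs \<subseteq> Kb" "Q = (\<Prod>q\<leftarrow>qs. x_minus q)" "\<forall>q\<in>set qs. mu (x_minus q) \<le> \<delta>"
    using Q_factorization by blast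
  have "mu Q - mu (hasse c Q) \<le> nsmul c B" if "hasse c Q \<noteq> 0" for c
  proof -
    have "mu Q - nsmul c \<delta> \<le> mu (hasse c Q)"
      using Kb.hasse_profile_prod_x_minus[OF qs(1,3)] that qs(2) by (simp add: Kb.hasse_profile_def)
    then have "mu Q - mu (hasse c Q) \<le> nsmul c \<delta>" by (simp add: algebra_simps)
    also have "\<dots> \<le> nsmul c B" using \<open>\<delta> \<le> B\<close> by (rule nsmul_mono)
    finally show ?thesis .
  qed
  then have "eps_ge nu h Q"
    using t nu_eq_mu h(1,2) Q_in_K Q_nonzero K.polys_over_hasse
    by (intro eps_ge_by_hasse_bounds[where B = B]) auto
  then show False using key h by (auto simp: is_key_poly_def)
qed

end

section \<open>Truncation at x - a\<close>

lemma const_poly_sum: "[:sum f A:] = (\<Sum>i\<in>A. [:f i:])"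
proof (induction A rule: infinite_finite_induct)
  case (insert x A)
  then show ?case using add_pCons[of "f x" 0 "sum f A" 0] by simp
qed simp_all

lemma const_poly_prod_list: "[:\<Prod>x\<leftarrow>xs. f x:] = (\<Prod>x\<leftarrow>xs. [:f x:])"
  by (induction xs) (simp_all add: one_pCons flip: mult_to_poly)

lemma pcompose_eq_sum_smult_power: "p \<circ>\<^sub>p q = (\<Sum>i\<le>degree p. smult (coeff p i) (q ^ i))"
  by (simp add: pcompose_altdef poly_altdef degree_map_poly coeff_map_poly)

context key_poly_setting
begin

lemma polys_over_shift: "[:a, 1:] \<in> polys_over Kb"
  by (simp add: Kb.polys_over_pCons_iff a_in_Kb Kb.one_mem Kb.polys_over_zero)

text \<open>For P = h(x + a), \<mu>(c_i) + i\<delta> is the value of the term c_i (x - a)^i of the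
  (x - a)-expansion of h.\<close>
definition terms_ge :: "'g \<Rightarrow> 'a poly \<Rightarrow> bool" where
  "terms_ge B P \<longleftrightarrow> (\<forall>i. coeff P i \<noteq> 0 \<longrightarrow> B \<le> mu [:coeff P i:] + nsmul i \<delta>)"

text \<open>Since always \<mu>(h) \<ge> \<mu>_{x-a}(h), this says \<mu>_{x-a}(h) = \<mu>(h) (\<open>trunc_lin_eq_if_exact\<close>).\<close>
definition trunc_lin_exact :: "'a poly \<Rightarrow> bool" where
  "trunc_lin_exact h \<longleftrightarrow> h \<in> polys_over Kb \<and> h \<noteq> 0 \<and> terms_ge (mu h) (h \<circ>\<^sub>p [:a, 1:])"

lemma terms_ge_mono: "terms_ge B P \<Longrightarrow> C \<le> B \<Longrightarrow> terms_ge C P"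
  unfolding terms_ge_def using order.trans by blast

lemma terms_ge_add:
  assumes "P \<in> polys_over Kb" "R \<in> polys_over Kb" "terms_ge B P" "terms_ge B R"
  shows "terms_ge B (P + R)"
  unfolding terms_ge_def
proof (intro allI impI)
  fix i assume "coeff (P + R) i \<noteq> 0"
  then have "B - nsmul i \<delta> \<le> mu ([:coeff P i:] + [:coeff R i:])"
    using assms by (intro Kb.val_add_ge Kb.polys_over_const Kb.polys_over_coeff)
      (auto simp: terms_ge_def algebra_simps)
  then show "B \<le> mu [:coeff (P + R) i:] + nsmul i \<delta>" by (simp add: algebra_simps)
qed

lemma terms_ge_sum:
  "(\<And>i. i \<in> A \<Longrightarrow> f i \<in> polys_over Kb \<and> terms_ge B (f i)) \<Longrightarrow> terms_ge B (sum f A)"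
proof (induction A rule: infinite_finite_induct)
  case (insert x A)
  then show ?case by (auto intro!: terms_ge_add Kb.polys_over_sum)
qed (simp_all add: terms_ge_def)

lemma terms_ge_mult:
  assumes P: "P \<in> polys_over Kb" "terms_ge B P" and R: "R \<in> polys_over Kb" "terms_ge C R"
  shows "terms_ge (B + C) (P * R)"
  unfolding terms_ge_def
proof (intro allI impI)
  fix k assume ne: "coeff (P * R) k \<noteq> 0"
  have coeff_eq: "[:coeff (P * R) k:] = (\<Sum>i\<le>k. [:coeff P i * coeff R (k - i):])"
    by (simp add: coeff_mult const_poly_sum)
  have "B + C - nsmul k \<delta> \<le> mu (\<Sum>i\<le>k. [:coeff P i * coeff R (k - i):])"
  proof (rule Kb.val_sum_ge)
    fix i assume i: "i \<in> {..k}"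
    show "[:coeff P i * coeff R (k - i):] \<in> polys_over Kb"
      using P R by (auto intro!: Kb.polys_over_const Kb.mult_mem Kb.polys_over_coeff)
    assume "[:coeff P i * coeff R (k - i):] \<noteq> 0"
    then have nz: "coeff P i \<noteq> 0" "coeff R (k - i) \<noteq> 0" by auto
    have "B + C \<le> (mu [:coeff P i:] + nsmul i \<delta>) + (mu [:coeff R (k - i):] + nsmul (k - i) \<delta>)"
      using P(2) R(2) nz by (intro add_mono) (auto simp: terms_ge_def)
    also have "\<dots> = mu [:coeff P i * coeff R (k - i):] + nsmul k \<delta>"
      using Kb.val_const_mult[OF Kb.polys_over_coeff[OF P(1)] Kb.polys_over_coeff[OF R(1)] nz]
        i nsmul_add_left[of i "k - i" \<delta>] by (simp add: algebra_simps)
    finally show "B + C - nsmul k \<delta> \<le> mu [:coeff P i * coeff R (k - i):]"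
      by (simp add: algebra_simps)
  qed (use ne in \<open>simp flip: coeff_eq\<close>)
  then show "B + C \<le> mu [:coeff (P * R) k:] + nsmul k \<delta>"
    using coeff_eq by (simp add: algebra_simps)
qed

lemma trunc_lin_exact_mult:
  assumes "trunc_lin_exact h1" "trunc_lin_exact h2"
  shows "trunc_lin_exact (h1 * h2)"
  using assms terms_ge_mult[of "h1 \<circ>\<^sub>p [:a, 1:]" _ "h2 \<circ>\<^sub>p [:a, 1:]"]
    Kb.polys_over_pcompose[OF _ polys_over_shift]
  by (auto simp: trunc_lin_exact_def pcompose_mult Kb.val_mult Kb.polys_over_mult)

lemma trunc_lin_exact_const: "c \<in> Kb \<Longrightarrow> c \<noteq> 0 \<Longrightarrow> trunc_lin_exact [:c:]"
  by (auto simp: trunc_lin_exact_def terms_ge_def Kb.polys_over_const coeff_pCons split: nat.split)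

lemma trunc_lin_exact_power: "trunc_lin_exact h \<Longrightarrow> trunc_lin_exact (h ^ k)"
  using trunc_lin_exact_const[OF Kb.one_mem]
  by (induction k) (auto intro: trunc_lin_exact_mult simp: one_pCons)

lemma trunc_lin_exact_x_minus:
  assumes b: "b \<in> Kb" "mu (x_minus b) \<le> \<delta>"
  shows "trunc_lin_exact (x_minus b)"
proof -
  have shift: "x_minus b \<circ>\<^sub>p [:a, 1:] = [:a - b, 1:]" by (simp add: x_minus_def pcompose_pCons)
  have "mu (x_minus b) \<le> mu [:a - b:]" if "a \<noteq> b"
  proof -
    have "[:a - b:] = x_minus b + - x_minus a" by (simp add: x_minus_def)
    moreover have "x_minus b + - x_minus a \<noteq> 0" using that by (simp add: x_minus_def)
    moreover have "mu (- x_minus a) = \<delta>"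
      using Kb.val_uminus Kb.polys_over_x_minus[OF a_in_Kb] by (simp add: \<delta>_def)
    ultimately show ?thesis
      using Kb.val_add_ge[of "x_minus b" "- x_minus a" "mu (x_minus b)"] that b
        Kb.polys_over_x_minus Kb.polys_over_uminus a_in_Kb by auto
  qed
  then have "terms_ge (mu (x_minus b)) [:a - b, 1:]"
    using b(2) Kb.val_one by (auto simp: terms_ge_def coeff_pCons one_pCons[symmetric] split: nat.splits)
  then show ?thesis using shift Kb.polys_over_x_minus[OF b(1)] by (simp add: trunc_lin_exact_def)
qed

lemma trunc_lin_exact_factored:
  "c \<in> Kb \<Longrightarrow> c \<noteq> 0 \<Longrightarrow> set bs \<subseteq> Kb \<Longrightarrow> \<forall>b\<in>set bs. mu (x_minus b) \<le> \<delta> \<Longrightarrow>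
     trunc_lin_exact (smult c (\<Prod>b\<leftarrow>bs. x_minus b))"
proof (induction bs)
  case Nil
  then show ?case using trunc_lin_exact_const by simp
next
  case (Cons b bs)
  then show ?case
    using trunc_lin_exact_mult[OF trunc_lin_exact_x_minus[of b]] by (simp flip: mult_smult_right)
qed

lemma trunc_lin_eq_if_exact:
  assumes "trunc_lin_exact h"
  shows "trunc_lin mu a h = mu h"
proof -
  define G where "G = h \<circ>\<^sub>p [:a, 1:]"
  have h: "h \<in> polys_over Kb" "h \<noteq> 0" and bound: "terms_ge (mu h) G"
    using assms by (auto simp: trunc_lin_exact_def G_def)
  have G: "G \<in> polys_over Kb" "degree G = degree h"
    using Kb.polys_over_pcompose[OF h(1) polys_over_shift] by (simp_all add: G_def degree_pcompose)
  define S where "S = {mu [:coeff G i:] + nsmul i \<delta> | i. i \<le> degree h \<and> coeff G i \<noteq> 0}"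
  have trunc_eq: "trunc_lin mu a h = Min S"
    unfolding trunc_lin_def S_def G_def \<delta>_def x_minus_def ..
  have "G \<noteq> 0" using h(2) pcompose_eq_0[of h "[:a, 1:]"] by (auto simp: G_def)
  then have "coeff G (degree h) \<noteq> 0" using G(2) by (metis leading_coeff_0_iff)
  then have S: "finite S" "S \<noteq> {}" unfolding S_def by auto
  have expansion: "h = (\<Sum>i\<le>degree G. smult (coeff G i) (x_minus a ^ i))"
  proof -
    have "[:a, 1:] \<circ>\<^sub>p x_minus a = [:0, 1:]" by (simp add: x_minus_def pcompose_pCons)
    then have "G \<circ>\<^sub>p x_minus a = h" by (simp add: G_def flip: pcompose_assoc)
    then show ?thesis by (simp add: pcompose_eq_sum_smult_power)
  qed
  have "mu h \<le> Min S" using S bound unfolding S_def terms_ge_def by auto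
  moreover have "Min S \<le> mu (\<Sum>i\<le>degree G. smult (coeff G i) (x_minus a ^ i))"
  proof (rule Kb.val_sum_ge)
    fix i assume i: "i \<in> {..degree G}"
    have lin: "x_minus a \<in> polys_over Kb" using Kb.polys_over_x_minus[OF a_in_Kb] .
    have c: "coeff G i \<in> Kb" using Kb.polys_over_coeff[OF G(1)] .
    show "smult (coeff G i) (x_minus a ^ i) \<in> polys_over Kb"
      using Kb.polys_over_mult[OF Kb.polys_over_const[OF c] Kb.polys_over_power[OF lin]] by simp
    assume "smult (coeff G i) (x_minus a ^ i) \<noteq> 0"
    then have "coeff G i \<noteq> 0" by auto
    moreover from this have "mu (smult (coeff G i) (x_minus a ^ i)) = mu [:coeff G i:] + nsmul i \<delta>"
      using Kb.val_smult[OF c _ Kb.polys_over_power[OF lin]] Kb.val_power[OF lin] by (simp add: \<delta>_def)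
    ultimately show "Min S \<le> mu (smult (coeff G i) (x_minus a ^ i))"
      using i G(2) S(1) unfolding S_def by (auto intro: Min_le)
  qed (use h(2) expansion in auto)
  ultimately show ?thesis using trunc_eq expansion by simp
qed

lemma trunc_lin_exact_sum:
  assumes "\<And>i. i \<in> A \<Longrightarrow> trunc_lin_exact (f i) \<and> mu (sum f A) \<le> mu (f i)"
    and "sum f A \<noteq> 0" "sum f A \<in> polys_over Kb"
  shows "trunc_lin_exact (sum f A)"
proof -
  have "terms_ge (mu (sum f A)) (\<Sum>i\<in>A. f i \<circ>\<^sub>p [:a, 1:])"
    using assms(1) Kb.polys_over_pcompose[OF _ polys_over_shift]
    by (intro terms_ge_sum) (auto simp: trunc_lin_exact_def intro: terms_ge_mono)
  then show ?thesis using assms(2,3) by (simp add: trunc_lin_exact_def pcompose_sum)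
qed

end

section \<open>Values at a and the minimum over the Q-expansion\<close>

context key_poly_setting
begin

lemma val_const_a_minus:
  assumes "b \<in> Kb" "mu (x_minus b) < \<delta>"
  shows "a \<noteq> b \<and> mu [:a - b:] = mu (x_minus b)"
proof -
  have lin: "x_minus a \<in> polys_over Kb" using Kb.polys_over_x_minus[OF a_in_Kb] .
  have "mu (x_minus b) < mu (- x_minus a)"
    using assms(2) Kb.val_uminus[OF lin] by (simp add: \<delta>_def)
  then have "mu (x_minus b + - x_minus a) = mu (x_minus b)"
    using Kb.val_add_dominant[OF Kb.polys_over_x_minus[OF assms(1)] Kb.polys_over_uminus[OF lin]] by simp
  moreover have "x_minus b + - x_minus a = [:a - b:]" by (simp add: x_minus_def)
  ultimately show ?thesis using assms(2) by (auto simp: \<delta>_def)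
qed

lemma val_eq_val_at_a_if_roots_farther:
  assumes c: "c \<in> Kb" "c \<noteq> 0" and bs: "set bs \<subseteq> Kb" "\<forall>b\<in>set bs. mu (x_minus b) < \<delta>"
  defines "h \<equiv> smult c (\<Prod>b\<leftarrow>bs. x_minus b)"
  shows "poly h a \<noteq> 0 \<and> mu h = mu [:poly h a:]"
proof -
  have roots: "a \<noteq> b" "mu [:a - b:] = mu (x_minus b)" "a - b \<in> Kb" if "b \<in> set bs" for b
    using that val_const_a_minus bs Kb.diff_mem a_in_Kb by auto
  have "mu (\<Prod>b\<leftarrow>bs. x_minus b) = (\<Sum>b\<leftarrow>bs. mu (x_minus b))"
    using bs by (intro Kb.val_prod_list) (auto intro: Kb.polys_over_x_minus)
  also have "\<dots> = (\<Sum>b\<leftarrow>bs. mu [:a - b:])" using roots(2) by (simp cong: map_cong)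
  also have "\<dots> = mu [:\<Prod>b\<leftarrow>bs. a - b:]"
    using roots by (simp add: const_poly_prod_list Kb.val_prod_list Kb.polys_over_const)
  finally have "mu (\<Prod>b\<leftarrow>bs. x_minus b) = mu [:\<Prod>b\<leftarrow>bs. a - b:]" .
  moreover have "(\<Prod>b\<leftarrow>bs. a - b) \<in> Kb" "(\<Prod>b\<leftarrow>bs. a - b) \<noteq> 0"
    using roots by (auto intro: Kb.prod_list_mem simp: prod_list_zero_iff)
  ultimately show ?thesis
    using c Kb.val_smult[OF c Kb.polys_over_prod_x_minus[OF bs(1)] prod_x_minus_nonzero]
      Kb.val_const_mult[OF c(1)] by (simp add: h_def poly_prod_x_minus)
qed

lemma small_degree_val_at_a:
  assumes h: "h \<in> polys_over K" "h \<noteq> 0" "degree h < degree Q"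
  shows "poly h a \<noteq> 0 \<and> mu h = mu [:poly h a:] \<and> trunc_lin_exact h"
proof -
  obtain c bs where fact: "c \<in> Kb" "c \<noteq> 0" "set bs \<subseteq> Kb" "h = smult c (\<Prod>b\<leftarrow>bs. x_minus b)"
    using algebraic_closure_factorization[OF closure polys_over_K_imp_Kb[OF h(1)] h(2)] by blast
  have "\<forall>b\<in>set bs. mu (x_minus b) < \<delta>"
    using roots_of_small_degree_farther[OF h fact] .
  then show ?thesis
    using val_eq_val_at_a_if_roots_farther[OF fact(1-3)] trunc_lin_exact_factored[OF fact(1-3)] fact(4)
    by (simp add: less_imp_le)
qed

lemma trunc_lin_exact_Q: "trunc_lin_exact Q"
  using Q_factorization trunc_lin_exact_factored[OF Kb.one_mem] by (metis one_neq_zero smult_1_left)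

lemma poly_in_adjoin: "h \<in> polys_over K \<Longrightarrow> poly h a \<in> adjoin K a"
  unfolding adjoin_def
proof
  fix F assume "h \<in> polys_over K" and "F \<in> {F. is_subfield F \<and> K \<subseteq> F \<and> a \<in> F}"
  then have "subfield F" "h \<in> polys_over F" "a \<in> F" by (auto simp: subfield_def polys_over_def)
  then show "poly h a \<in> F" using subfield.poly_mem by blast
qed

lemma divide_in_adjoin: "x \<in> adjoin K a \<Longrightarrow> y \<in> adjoin K a \<Longrightarrow> x / y \<in> adjoin K a"
  unfolding adjoin_def by (auto intro!: subfield.divide_mem simp: subfield_def)

lemma adjoin_subset_Kb: "adjoin K a \<subseteq> Kb"
  unfolding adjoin_def using closure a_in_Kb by (auto simp: is_algebraic_closure_def)

lemma val_Q_term: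
  assumes "h \<in> polys_over K" "h \<noteq> 0" "degree h < degree Q"
  shows "mu (h * Q ^ i) = mu [:poly h a:] + nsmul i (nu Q)"
  using assms small_degree_val_at_a[OF assms] Q_in_K Q_nonzero nu_eq_mu
    Kb.val_mult[OF polys_over_K_imp_Kb polys_over_K_imp_Kb[OF K.polys_over_power]]
    Kb.val_power[OF polys_over_K_imp_Kb[OF Q_in_K]]
  by simp

text \<open>Two terms of a Q-expansion with equal value would differ by (j - i)\<nu>(Q) in value,
  while their quotient at a lies in K(a).\<close>
lemma val_Q_terms_distinct:
  assumes e_min: "\<forall>e'. 0 < e' \<and> e' < e \<longrightarrow> nsmul e' (nu Q) \<notin> value_group mu (adjoin K a)"
    and h1: "h1 \<in> polys_over K" "h1 \<noteq> 0" "degree h1 < degree Q"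
    and h2: "h2 \<in> polys_over K" "h2 \<noteq> 0" "degree h2 < degree Q"
    and ij: "i < j" "j < e"
  shows "mu (h1 * Q ^ i) \<noteq> mu (h2 * Q ^ j)"
proof
  assume eq: "mu (h1 * Q ^ i) = mu (h2 * Q ^ j)"
  define u where "u = poly h1 a"
  define w where "w = poly h2 a"
  have u: "u \<in> adjoin K a" "u \<noteq> 0" and w: "w \<in> adjoin K a" "w \<noteq> 0"
    using poly_in_adjoin small_degree_val_at_a h1 h2 by (auto simp: u_def w_def)
  have uw: "u / w \<in> adjoin K a" "u / w \<noteq> 0" using divide_in_adjoin[OF u(1) w(1)] u w by auto
  have "mu [:u:] = mu [:u / w:] + mu [:w:]"
    using Kb.val_const_mult[of "u / w" w] uw w adjoin_subset_Kb by auto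
  moreover have "mu [:u:] + nsmul i (nu Q) = mu [:w:] + (nsmul (j - i) (nu Q) + nsmul i (nu Q))"
    using eq val_Q_term[OF h1] val_Q_term[OF h2] ij nsmul_add_left[of "j - i" i "nu Q"]
    by (simp add: u_def w_def)
  ultimately have "nsmul (j - i) (nu Q) = mu [:u / w:]" by (simp add: algebra_simps)
  then have "nsmul (j - i) (nu Q) \<in> value_group mu (adjoin K a)"
    using uw unfolding value_group_def by blast
  then show False using e_min ij by auto
qed

lemma trunc_Q_eq_Min_mu:
  assumes "g \<in> polys_over K"
  shows "trunc_Q nu Q g = Min ((\<lambda>i. mu (Q_coeff Q g i * Q ^ i)) ` {i. i \<le> degree g \<and> Q_coeff Q g i \<noteq> 0})"
proof -
  have "nu (Q_coeff Q g i * Q ^ i) = mu (Q_coeff Q g i * Q ^ i)" if "Q_coeff Q g i \<noteq> 0" for i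
    using that K.polys_over_Q_coeff[OF Q_in_K Q_monic assms] Q_in_K Q_nonzero
    by (intro nu_eq_mu) (auto intro: K.polys_over_mult K.polys_over_power)
  then have "{nu (Q_coeff Q g i * Q ^ i) | i. i \<le> degree g \<and> Q_coeff Q g i \<noteq> 0}
      = (\<lambda>i. mu (Q_coeff Q g i * Q ^ i)) ` {i. i \<le> degree g \<and> Q_coeff Q g i \<noteq> 0}"
    by (auto simp: image_def) metis
  then show ?thesis unfolding trunc_Q_def by simp
qed

lemma trunc_lin_eq_val_eq_trunc_Q:
  assumes e_min: "\<forall>e'. 0 < e' \<and> e' < e \<longrightarrow> nsmul e' (nu Q) \<notin> value_group mu (adjoin K a)"
    and g: "g \<in> polys_over K" "g \<noteq> 0" "degree g < degree Q * e"
  shows "trunc_lin mu a g = mu g \<and> mu g = trunc_Q nu Q g"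
proof -
  define T where "T i = Q_coeff Q g i * Q ^ i" for i
  define I where "I = {i. i \<le> degree g \<and> Q_coeff Q g i \<noteq> 0}"
  have coeff: "Q_coeff Q g i \<in> polys_over K" "Q_coeff Q g i \<noteq> 0" "degree (Q_coeff Q g i) < degree Q"
    "i < e" if "i \<in> I" for i
    using that K.polys_over_Q_coeff[OF Q_in_K Q_monic g(1)] degree_Q_coeff_less[OF Q_nonzero]
    by (auto simp: I_def) (meson Q_coeff_eq_0[OF g(3)] not_le)
  have T: "T i \<in> polys_over Kb" "T i \<noteq> 0" if "i \<in> I" for i
    using coeff[OF that] Q_in_K Q_nonzero
    by (auto simp: T_def intro!: polys_over_K_imp_Kb K.polys_over_mult K.polys_over_power)
  have "g = sum T {..degree g}"
    using Q_expansion[OF degree_Q_pos, of g] by (simp add: T_def)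
  also have "\<dots> = sum T I"
    by (rule sum.mono_neutral_right) (auto simp: I_def T_def)
  finally have g_eq: "g = sum T I" .
  have "inj_on (\<lambda>i. mu (T i)) I"
  proof (rule linorder_inj_onI')
    fix i j assume "i \<in> I" "j \<in> I" "i < j"
    then show "mu (T i) \<noteq> mu (T j)"
      using val_Q_terms_distinct[OF e_min coeff(1-3)[of i] coeff(1-3)[of j]] coeff(4)[of j]
      by (simp add: T_def)
  qed
  moreover have "finite I" by (simp add: I_def)
  moreover have "I \<noteq> {}" using g(2) g_eq by auto
  ultimately have val_g: "mu g = Min ((\<lambda>i. mu (T i)) ` I)"
    using Kb.val_sum_distinct[of I T] T g_eq by simp
  moreover have "trunc_Q nu Q g = Min ((\<lambda>i. mu (T i)) ` I)"
    using trunc_Q_eq_Min_mu[OF g(1)] by (simp add: T_def I_def)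
  moreover have "trunc_lin_exact g"
  proof -
    have "trunc_lin_exact (T i)" if "i \<in> I" for i
      using small_degree_val_at_a[OF coeff(1-3)[OF that]] trunc_lin_exact_Q
      by (simp add: T_def trunc_lin_exact_mult trunc_lin_exact_power)
    moreover have "mu g \<le> mu (T i)" if "i \<in> I" for i
      using that val_g by (simp add: I_def)
    ultimately show ?thesis
      using g_eq g polys_over_K_imp_Kb by (metis trunc_lin_exact_sum)
  qed
  ultimately show ?thesis using val_g trunc_lin_eq_if_exact by simp
qed

end

text \<open>Only the minimality of e enters the proof; the other hypotheses on e and \<nu>(Q) just say which e
  is meant, and \<nu> is a valuation anyway since it agrees with \<mu> on K[x].\<close>
theorem lemma3p9:
  fixes K Kb :: "'a::field set"
    and nu mu :: "'a poly \<Rightarrow> 'g::linordered_ab_group_add"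
    and Q :: "'a poly" and a :: 'a and n e :: nat
  assumes "is_algebraic_closure K Kb"
    and "is_valuation K nu"
    and "is_valuation Kb mu"
    and "\<forall>f\<in>polys_over K. f \<noteq> 0 \<longrightarrow> mu f = nu f"
    and "is_key_poly K nu Q"
    and "degree Q = n"
    and "optimizing_root Kb mu Q a"
    and "nu Q \<in> value_group mu Kb"
    and "0 < e"
    and "nsmul e (nu Q) \<in> value_group mu (adjoin K a)"
    and "\<forall>e'. 0 < e' \<and> e' < e \<longrightarrow> nsmul e' (nu Q) \<notin> value_group mu (adjoin K a)"
  shows "\<forall>g\<in>polys_over K. g \<noteq> 0 \<longrightarrow> degree g < n * e \<longrightarrow>
           trunc_lin mu a g = mu g \<and> mu g = trunc_Q nu Q g"
proof -
  interpret key_poly_setting K Kb nu mu Q a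
    using assms(1,3-5,7) by unfold_locales
  show ?thesis
    using trunc_lin_eq_val_eq_trunc_Q[OF assms(11)] assms(6) by blast
qed

end
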